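(* Let $p,q\ge1$, $n=p+q$. For every $s\in\mathfrak{S}_{p,q}$, $\widetilde\alpha(Q_{p,q}(s))=T_s$ and $\widetilde\beta(T_s)=s$.
   Context: $\mathfrak{S}_n$ is generated by $s_i=(i,i+1)$; products are composed so that $(\sigma\tau)(x)=\tau(\sigma(x))$. $\mathfrak{S}_{p,q}$ is the set of $\sigma\in\mathfrak{S}_{p+q}$ with $\sigma^{-1}(1)<\cdots<\sigma^{-1}(p)$ and $\sigma^{-1}(p+1)<\cdots<\sigma^{-1}(p+q)$. Bubble decomposition: every $\sigma\in\mathfrak{S}_n$ factors uniquely as $\sigma=\sigma^{(n-1)}\cdots\sigma^{(1)}$ with $\sigma^{(k)}\in\{e,s_k,s_{k-1}s_k,\dots,s_1\cdots s_k\}$; $t_k(\sigma)=t$ if $\sigma^{(k)}=s_t\cdots s_k$, $t_k(\sigma)=0$ if $\sigma^{(k)}=e$, and $t_n(\sigma)=0$. $\operatorname{GVB}_n^+$ is the monoid generated by $\sigma_1,\dots,\sigma_{n-1},\xi_1,\dots,\xi_{n-1}$ subject to: for $|i-j|>1$, $\sigma_i\sigma_j=\sigma_j\sigma_i$, $\sigma_i\xi_j=\xi_j\sigma_i$, $\xi_i\xi_j=\xi_j\xi_i$; for $1\le i\le n-2$, $\sigma_i\sigma_{i+1}\sigma_i=\sigma_{i+1}\sigma_i\sigma_{i+1}$, $\xi_i\xi_{i+1}\xi_i=\xi_{i+1}\xi_i\xi_{i+1}$, $\xi_i\sigma_{i+1}\sigma_i=\sigma_{i+1}\sigma_i\xi_{i+1}$,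 $\xi_{i+1}\sigma_i\sigma_{i+1}=\sigma_i\sigma_{i+1}\xi_i$. $\mathfrak{B}_n^+$ is the positive braid monoid on $\sigma_1,\dots,\sigma_{n-1}$. $\widetilde\alpha:\mathbb{K}[\operatorname{GVB}_n^+]\to\mathbb{K}[\mathfrak{B}_n^+]$ is the algebra quotient by the ideal generated by all $\xi_i$ ($\sigma_i\mapsto\sigma_i$, $\xi_i\mapsto0$), and $\widetilde\beta:\mathbb{K}[\mathfrak{B}_n^+]\to\mathbb{K}[\mathfrak{S}_n]$ is the quotient by the ideal generated by all $\sigma_i^2-1$ ($\sigma_i\mapsto s_i$). Matsumoto–Tits section: for $s\in\mathfrak{S}_n$ with reduced expression $s=s_{i_1}\cdots s_{i_l}$, $T_s=\sigma_{i_1}\cdots\sigma_{i_l}\in\mathfrak{B}_n^+$ (independent of the reduced expression). For $s\in\mathfrak{S}_{p,q}$ with $t_k=t_k(s)$, $$Q_{p,q}(s)=\prod_{k=n-1,\dots,1;\ s^{(k)}\neq e}\big(\sigma_{t_k}+(1-\delta_{t_k+1,t_{k+1}})\sigma_1\cdots\sigma_{t_k-1}\xi_{t_k}\big)\sigma_{t_k+1}\cdots\sigma_k\in\mathbb{K}[\operatorname{GVB}_n^+],$$ factors ordered with $k$ decreasing from left to right, $\delta$ the Kronecker delta, empty products equal to $e$. *)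

theory Defs
  imports "HOL-Combinatorics.Permutations"
begin

text \<open>Words in the generators sigma_i (Sig i) and xi_i (Xi i).  Words over Sig only are
  words in the positive braid monoid generators.\<close>

datatype gen = Sig nat | Xi nat

fun is_Sig :: "gen \<Rightarrow> bool" where
  "is_Sig (Sig _) = True" | "is_Sig (Xi _) = False"

fun gidx :: "gen \<Rightarrow> nat" where
  "gidx (Sig i) = i" | "gidx (Xi i) = i"

inductive gvb_rel :: "nat \<Rightarrow> gen list \<Rightarrow> gen list \<Rightarrow> bool" for n where
  ss: "\<lbrakk>1 \<le> i; i < n; 1 \<le> j; j < n; i + 1 < j \<or> j + 1 < i\<rbrakk> \<Longrightarrow> gvb_rel n [Sig i, Sig j] [Sig j, Sig i]"
| sx: "\<lbrakk>1 \<le> i; i < n; 1 \<le> j; j < n; i + 1 < j \<or> j + 1 < i\<rbrakk> \<Longrightarrow> gvb_rel n [Sig i, Xi j] [Xi j, Sig i]"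
| xx: "\<lbrakk>1 \<le> i; i < n; 1 \<le> j; j < n; i + 1 < j \<or> j + 1 < i\<rbrakk> \<Longrightarrow> gvb_rel n [Xi i, Xi j] [Xi j, Xi i]"
| sss: "\<lbrakk>1 \<le> i; i + 2 \<le> n\<rbrakk> \<Longrightarrow> gvb_rel n [Sig i, Sig (i+1), Sig i] [Sig (i+1), Sig i, Sig (i+1)]"
| xxx: "\<lbrakk>1 \<le> i; i + 2 \<le> n\<rbrakk> \<Longrightarrow> gvb_rel n [Xi i, Xi (i+1), Xi i] [Xi (i+1), Xi i, Xi (i+1)]"
| xss: "\<lbrakk>1 \<le> i; i + 2 \<le> n\<rbrakk> \<Longrightarrow> gvb_rel n [Xi i, Sig (i+1), Sig i] [Sig (i+1), Sig i, Xi (i+1)]"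
| xss': "\<lbrakk>1 \<le> i; i + 2 \<le> n\<rbrakk> \<Longrightarrow> gvb_rel n [Xi (i+1), Sig i, Sig (i+1)] [Sig i, Sig (i+1), Xi i]"

inductive braid_rel :: "nat \<Rightarrow> gen list \<Rightarrow> gen list \<Rightarrow> bool" for n where
  ss: "\<lbrakk>1 \<le> i; i < n; 1 \<le> j; j < n; i + 1 < j \<or> j + 1 < i\<rbrakk> \<Longrightarrow> braid_rel n [Sig i, Sig j] [Sig j, Sig i]"
| sss: "\<lbrakk>1 \<le> i; i + 2 \<le> n\<rbrakk> \<Longrightarrow> braid_rel n [Sig i, Sig (i+1), Sig i] [Sig (i+1), Sig i, Sig (i+1)]"

definition ctx_step :: "('a list \<Rightarrow> 'a list \<Rightarrow> bool) \<Rightarrow> 'a list \<Rightarrow> 'a list \<Rightarrow> bool" where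
  "ctx_step R u v \<longleftrightarrow> (\<exists>a b l r. R l r \<and> u = a @ l @ b \<and> v = a @ r @ b)"

definition mon_cong :: "('a list \<Rightarrow> 'a list \<Rightarrow> bool) \<Rightarrow> 'a list \<Rightarrow> 'a list \<Rightarrow> bool" where
  "mon_cong R = (\<lambda>u v. ctx_step R u v \<or> ctx_step R v u)\<^sup>*\<^sup>*"

text \<open>An element of the monoid algebra K[M] is represented by a formal K-linear combination
  (list of coefficient/representative pairs) of representatives of elements of M; two such
  combinations denote the same element of K[M] iff, for every element of M (equivalence class
  of representatives under E), the total coefficients agree.\<close>

type_synonym ('k, 'a) fsum = "('k \<times> 'a) list"

definition fs_eq :: "('a \<Rightarrow> 'a \<Rightarrow> bool) \<Rightarrow> ('k::comm_ring_1, 'a) fsum \<Rightarrow> ('k, 'a) fsum \<Rightarrow> bool" where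
  "fs_eq E x y \<longleftrightarrow> (\<forall>w. sum_list [c. (c, v) \<leftarrow> x, E v w] = sum_list [c. (c, v) \<leftarrow> y, E v w])"

definition fs_mult :: "('k::comm_ring_1, 'a list) fsum \<Rightarrow> ('k, 'a list) fsum \<Rightarrow> ('k, 'a list) fsum" where
  "fs_mult x y = [(c * d, v @ w). (c, v) \<leftarrow> x, (d, w) \<leftarrow> y]"

definition fs_prod :: "('k::comm_ring_1, 'a list) fsum list \<Rightarrow> ('k, 'a list) fsum" where
  "fs_prod xs = foldr fs_mult xs [(1, [])]"

definition sw :: "nat \<Rightarrow> nat \<Rightarrow> nat" where
  "sw i = (\<lambda>x. if x = i then i + 1 else if x = i + 1 then i else x)"

text \<open>Product s_{i1} ... s_{il} with the convention (sigma tau)(x) = tau(sigma(x)).\<close>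
fun perm_of :: "nat list \<Rightarrow> nat \<Rightarrow> nat" where
  "perm_of [] = id"
| "perm_of (i # w) = perm_of w \<circ> sw i"

definition Sym :: "nat \<Rightarrow> (nat \<Rightarrow> nat) set" where
  "Sym n = {\<sigma>. \<sigma> permutes {1..n}}"

definition shuffles :: "nat \<Rightarrow> nat \<Rightarrow> (nat \<Rightarrow> nat) set" where
  "shuffles p q = {\<sigma> \<in> Sym (p + q).
      (\<forall>i j. 1 \<le> i \<and> i < j \<and> j \<le> p \<longrightarrow> inv \<sigma> i < inv \<sigma> j) \<and>
      (\<forall>i j. p + 1 \<le> i \<and> i < j \<and> j \<le> p + q \<longrightarrow> inv \<sigma> i < inv \<sigma> j)}"

definition bubble_word :: "nat \<Rightarrow> nat \<Rightarrow> nat list" where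
  "bubble_word k t = (if t = 0 then [] else [t..<k+1])"

definition bubble_t :: "nat \<Rightarrow> (nat \<Rightarrow> nat) \<Rightarrow> nat \<Rightarrow> nat" where
  "bubble_t n \<sigma> = (THE t. (\<forall>k. (k \<in> {1..n-1} \<longrightarrow> t k \<le> k) \<and> (k \<notin> {1..n-1} \<longrightarrow> t k = 0)) \<and>
       \<sigma> = perm_of (concat (map (\<lambda>k. bubble_word k (t k)) (rev [1..<n]))))"

definition Sigs :: "nat list \<Rightarrow> gen list" where
  "Sigs w = map Sig w"

definition Q_factor :: "nat \<Rightarrow> nat \<Rightarrow> nat \<Rightarrow> ('k::comm_ring_1, gen list) fsum" where
  "Q_factor k t t' =
     fs_mult [(1, [Sig t]), (1 - (if t + 1 = t' then 1 else 0), Sigs [1..<t] @ [Xi t])]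
             [(1, Sigs [t+1..<k+1])]"

definition Q :: "nat \<Rightarrow> nat \<Rightarrow> (nat \<Rightarrow> nat) \<Rightarrow> ('k::comm_ring_1, gen list) fsum" where
  "Q p q s = (let n = p + q; t = bubble_t n s in
     fs_prod [Q_factor k (t k) (t (k+1)). k \<leftarrow> rev [1..<n], t k \<noteq> 0])"

text \<open>alpha~ : sigma_i -> sigma_i, xi_i -> 0, extended multiplicatively and linearly.\<close>
definition alpha_t :: "('k::comm_ring_1, gen list) fsum \<Rightarrow> ('k, gen list) fsum" where
  "alpha_t x = [(c, v). (c, v) \<leftarrow> x, list_all is_Sig v]"

definition beta_t :: "('k::comm_ring_1, gen list) fsum \<Rightarrow> ('k, nat \<Rightarrow> nat) fsum" where
  "beta_t x = [(c, perm_of (map gidx v)). (c, v) \<leftarrow> x]"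

definition reduced_expr :: "nat \<Rightarrow> (nat \<Rightarrow> nat) \<Rightarrow> nat list \<Rightarrow> bool" where
  "reduced_expr n s w \<longleftrightarrow> set w \<subseteq> {1..n-1} \<and> perm_of w = s \<and>
     (\<forall>w'. set w' \<subseteq> {1..n-1} \<and> perm_of w' = s \<longrightarrow> length w \<le> length w')"

definition T :: "nat \<Rightarrow> (nat \<Rightarrow> nat) \<Rightarrow> ('k::comm_ring_1, gen list) fsum" where
  "T n s = [(1, Sigs (SOME w. reduced_expr n s w))]"

end

theory Submission
  imports Defs
begin

text \<open>Write s = s^(n-1) ... s^(1) for the bubble decomposition of s. In the factor of Q_{p,q}(s)
  belonging to k every summand other than sigma_(t_k) sigma_(t_k+1) ... sigma_k contains a xi, so
  alpha~ maps Q_{p,q}(s) to the braid word of the bubble expression of s. Each letter of that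
  expression is applied at an ascent, so its length is the number of inversions of s: it is a
  reduced expression. By Matsumoto's theorem (the usual exchange induction) any two
  reduced expressions of s are related by braid relations, hence define the same element T_s of
  B_n^+; and beta~(T_s) = s because a reduced expression of s spells s.\<close>

section \<open>Inversions and reduced words\<close>

lemma sw_sw [simp]: "sw i (sw i x) = x"
  by (simp add: sw_def)

lemma sw_eq_transpose: "sw i = transpose i (i + 1)"
  by (simp add: fun_eq_iff sw_def transpose_def)

lemma perm_of_append: "perm_of (xs @ ys) = perm_of ys \<circ> perm_of xs"
  by (induction xs) auto

lemma perm_of_rev_comp: "perm_of (rev w) \<circ> perm_of w = id"
  by (induction w) (simp_all add: perm_of_append fun_eq_iff)

lemma perm_of_comp_rev: "perm_of w \<circ> perm_of (rev w) = id"
  using perm_of_rev_comp[of "rev w"] by simp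

lemma inj_perm_of: "inj (perm_of w)"
  using perm_of_rev_comp[of w] by (metis inj_on_id inj_on_imageI2)

lemma perm_of_permutes: "set w \<subseteq> {1..n-1} \<Longrightarrow> perm_of w permutes {1..n}"
proof (induction w)
  case (Cons a w)
  then have "sw a permutes {1..n}"
    unfolding sw_eq_transpose by (intro permutes_swap_id) auto
  moreover have "perm_of w permutes {1..n}"
    using Cons by auto
  ultimately show ?case
    by (simp only: perm_of.simps permutes_compose)
qed simp

lemma perm_of_fixpoint: "(\<And>l. l \<in> set w \<Longrightarrow> l \<noteq> x \<and> l + 1 \<noteq> x) \<Longrightarrow> perm_of w x = x"
  by (induction w) (auto simp: sw_def)

lemma perm_of_upt_first: "a \<le> b + 1 \<Longrightarrow> perm_of [a..<b+1] a = b + 1"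
proof (induction "b + 1 - a" arbitrary: a)
  case (Suc d)
  then have "[a..<b+1] = a # [a+1..<b+1]"
    by (simp only: upt_conv_Cons Suc_eq_plus1)
  moreover have "perm_of [a+1..<b+1] (a+1) = b + 1"
    using Suc by (simp del: upt.simps)
  ultimately show ?case
    by (simp del: upt.simps add: sw_def)
qed simp

definition inversions :: "nat \<Rightarrow> (nat \<Rightarrow> nat) \<Rightarrow> (nat \<times> nat) set" where
  "inversions n g = {(x, y). 1 \<le> x \<and> x < y \<and> y \<le> n \<and> g y < g x}"

definition inversion_number :: "nat \<Rightarrow> (nat \<Rightarrow> nat) \<Rightarrow> nat" where
  "inversion_number n g = card (inversions n g)"

lemma finite_inversions: "finite (inversions n g)"
  by (rule finite_subset[of _ "{1..n} \<times> {1..n}"]) (auto simp: inversions_def)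

lemma inversions_id: "inversions n (\<lambda>x. x) = {}"
  by (auto simp: inversions_def)

lemma inversions_Suc:
  assumes g: "g permutes {1..m}"
  shows "inversions (Suc m) g = inversions m g"
proof -
  have "y \<le> m" if "1 \<le> x" "x < y" "y \<le> Suc m" "g y < g x" for x y
  proof (rule ccontr)
    assume "\<not> y \<le> m"
    then have "y = Suc m" "g x \<le> m"
      using that permutes_in_image[OF g, of x] by auto
    then show False
      using that permutes_not_in[OF g, of "Suc m"] by simp
  qed
  then show ?thesis
    unfolding inversions_def by fastforce
qed

text \<open>Composing with sw i permutes all inversions except (i, i+1), which it toggles.\<close>

lemma card_inversions_comp_sw:
  assumes "1 \<le> i" "i < n"
  shows "card (inversions n (h \<circ> sw i) - {(i, i+1)}) = card (inversions n h - {(i, i+1)})"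
proof -
  let ?f = "\<lambda>(x, y). (sw i x, sw i y)"
  have "inversions n (h \<circ> sw i) - {(i, i+1)} = ?f ` (inversions n h - {(i, i+1)})"
  proof (intro equalityI subsetI)
    fix z assume "z \<in> inversions n (h \<circ> sw i) - {(i, i+1)}"
    moreover obtain x y where "z = (x, y)" by force
    ultimately have "(sw i x, sw i y) \<in> inversions n h - {(i, i+1)}" and "z = ?f (sw i x, sw i y)"
      using assms by (auto simp: inversions_def sw_def split: if_splits)
    then show "z \<in> ?f ` (inversions n h - {(i, i+1)})" by blast
  qed (use assms in \<open>auto simp: inversions_def sw_def split: if_splits\<close>)
  moreover have "inj ?f"
    by (rule injI) (auto, metis sw_sw, metis sw_sw)
  ultimately show ?thesis
    by (simp add: card_image inj_on_subset)
qed

lemma inversion_number_comp_sw_ascent: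
  assumes "1 \<le> i" "i < n" "h i < h (i+1)"
  shows "inversion_number n (h \<circ> sw i) = Suc (inversion_number n h)"
proof -
  have "(i, i+1) \<in> inversions n (h \<circ> sw i)" "(i, i+1) \<notin> inversions n h"
    using assms by (simp_all add: inversions_def sw_def)
  then show ?thesis
    using card_inversions_comp_sw[OF assms(1,2), of h] finite_inversions
    by (metis inversion_number_def card_Suc_Diff1 Diff_empty Diff_insert0)
qed

lemma inversion_number_comp_sw_descent:
  assumes "1 \<le> i" "i < n" "h (i+1) < h i"
  shows "Suc (inversion_number n (h \<circ> sw i)) = inversion_number n h"
proof -
  have "(i, i+1) \<notin> inversions n (h \<circ> sw i)" "(i, i+1) \<in> inversions n h"
    using assms by (simp_all add: inversions_def sw_def)
  then show ?thesis
    using card_inversions_comp_sw[OF assms(1,2), of h] finite_inversions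
    by (metis inversion_number_def card_Suc_Diff1 Diff_empty Diff_insert0)
qed

lemma perm_of_Suc_neq: "perm_of w i \<noteq> perm_of w (i+1)"
  using inj_perm_of[of w] by (auto dest: injD)

lemma inversion_number_le_length:
  "set w \<subseteq> {1..n-1} \<Longrightarrow> inversion_number n (perm_of w) \<le> length w"
proof (induction w)
  case Nil
  show ?case by (simp add: inversion_number_def inversions_id id_def)
next
  case (Cons a w)
  then have a: "1 \<le> a" "a < n" and w: "set w \<subseteq> {1..n-1}" by auto
  consider "perm_of w a < perm_of w (a+1)" | "perm_of w (a+1) < perm_of w a"
    using perm_of_Suc_neq[of w a] by linarith
  then show ?case
    using inversion_number_comp_sw_ascent[OF a, of "perm_of w"]
      inversion_number_comp_sw_descent[OF a, of "perm_of w"] Cons.IH[OF w]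
    unfolding perm_of.simps length_Cons by cases linarith+
qed

text \<open>Reduced words are defined through the inversion number rather than by minimal length;
  the two notions agree by reduced_expr_iff_reduced.\<close>

definition reduced :: "nat \<Rightarrow> nat list \<Rightarrow> bool" where
  "reduced n w \<longleftrightarrow> set w \<subseteq> {1..n-1} \<and> length w = inversion_number n (perm_of w)"

lemma reduced_Nil: "reduced n []"
  by (simp add: reduced_def inversion_number_def inversions_id id_def)

lemma reduced_Cons_iff:
  "reduced n (a # u) \<longleftrightarrow> reduced n u \<and> 1 \<le> a \<and> a < n \<and> perm_of u a < perm_of u (a+1)"
proof (cases "1 \<le> a \<and> a < n \<and> set u \<subseteq> {1..n-1}")
  case True
  then have a: "1 \<le> a" "a < n" and u: "set u \<subseteq> {1..n-1}" by auto
  consider "perm_of u a < perm_of u (a+1)" | "perm_of u (a+1) < perm_of u a"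
    using perm_of_Suc_neq[of u a] by linarith
  then show ?thesis
    using inversion_number_comp_sw_ascent[OF a, of "perm_of u"]
      inversion_number_comp_sw_descent[OF a, of "perm_of u"] inversion_number_le_length[OF u] u
    by cases (auto simp: reduced_def)
qed (auto simp: reduced_def)

section \<open>Bubble decomposition and reduced expressions\<close>

definition bubble_indices :: "nat \<Rightarrow> (nat \<Rightarrow> nat) \<Rightarrow> bool" where
  "bubble_indices n t \<longleftrightarrow>
     (\<forall>k. (k \<in> {1..n-1} \<longrightarrow> t k \<le> k) \<and> (k \<notin> {1..n-1} \<longrightarrow> t k = 0))"

definition bubble_expr :: "nat \<Rightarrow> (nat \<Rightarrow> nat) \<Rightarrow> nat list" where
  "bubble_expr n t = concat (map (\<lambda>k. bubble_word k (t k)) (rev [1..<n]))"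

lemma bubble_t_altdef: "bubble_t n s = (THE t. bubble_indices n t \<and> s = perm_of (bubble_expr n t))"
  by (simp add: bubble_t_def bubble_indices_def bubble_expr_def)

lemma bubble_expr_trivial: "n \<le> 1 \<Longrightarrow> bubble_expr n t = []"
  by (simp add: bubble_expr_def)

lemma bubble_indices_iff: "bubble_indices n t \<longleftrightarrow> (\<forall>k. t k \<le> k \<and> (n \<le> k \<longrightarrow> t k = 0))"
proof -
  have "k \<in> {1..n-1} \<longleftrightarrow> 0 < k \<and> k < n" for k
    by auto
  then show ?thesis
    unfolding bubble_indices_def by (metis le0 le_zero_eq linorder_not_le neq0_conv)
qed

lemma bubble_indices_trivial:
  assumes "n \<le> 1" shows "bubble_indices n t \<longleftrightarrow> t = (\<lambda>_. 0)"
proof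
  assume t: "bubble_indices n t"
  show "t = (\<lambda>_. 0)"
  proof
    fix k
    show "t k = 0"
      using t assms by (cases "k = 0") (auto simp: bubble_indices_iff)
  qed
qed (simp add: bubble_indices_iff)

lemma bubble_indices_restrict: "bubble_indices (Suc m) t \<Longrightarrow> bubble_indices m (t(m := 0))"
  by (simp add: bubble_indices_iff)

lemma bubble_indices_extend: "bubble_indices m t \<Longrightarrow> x \<le> m \<Longrightarrow> bubble_indices (Suc m) (t(m := x))"
  by (simp add: bubble_indices_iff)

lemma bubble_indices_le: "bubble_indices n t \<Longrightarrow> t k \<le> k"
  by (simp add: bubble_indices_iff)

lemma bubble_expr_Suc:
  "1 \<le> m \<Longrightarrow> bubble_expr (Suc m) t = bubble_word m (t m) @ bubble_expr m (t(m := x))"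
  unfolding bubble_expr_def by (auto intro!: arg_cong[where f = concat] map_cong)

lemma set_bubble_expr: "bubble_indices n t \<Longrightarrow> set (bubble_expr n t) \<subseteq> {1..n-1}"
  unfolding bubble_expr_def bubble_word_def bubble_indices_iff
  by (auto split: if_splits dest!: spec[where P = "\<lambda>k. t k \<le> k \<and> _ k"])

lemma perm_of_bubble_expr_fixes: "bubble_indices m t \<Longrightarrow> perm_of (bubble_expr m t) (Suc m) = Suc m"
  by (rule perm_of_fixpoint) (use set_bubble_expr in fastforce)

text \<open>The bubble factor of the top index m is determined by the preimage of m + 1, which
  it moves into place; peeling it off leaves a permutation of 1..m.\<close>

lemma bubble_word_peel:
  assumes s: "s permutes {1..Suc m}" and m: "1 \<le> m"
  obtains x where "x \<le> m" "s \<circ> perm_of (rev (bubble_word m x)) permutes {1..m}"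
proof -
  define y where "y = inv s (Suc m)"
  have sy: "s y = Suc m"
    unfolding y_def using permutes_inverses(1)[OF s] .
  have y: "y \<in> {1..Suc m}"
    unfolding y_def using permutes_in_image[OF permutes_inv[OF s]] by simp
  define x where "x = (if y = Suc m then 0 else y)"
  have "x \<le> m"
    using y by (auto simp: x_def)
  have "perm_of (bubble_word m x) y = Suc m"
    using y perm_of_upt_first[of y m] by (auto simp: x_def bubble_word_def)
  then have fix_top: "(s \<circ> perm_of (rev (bubble_word m x))) (Suc m) = Suc m"
    using sy fun_cong[OF perm_of_rev_comp, of "bubble_word m x" y] by simp
  have "s \<circ> perm_of (rev (bubble_word m x)) permutes {1..Suc m}"
    using m \<open>x \<le> m\<close> by (intro permutes_compose[OF perm_of_permutes s]) (auto simp: bubble_word_def)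
  then have "s \<circ> perm_of (rev (bubble_word m x)) permutes {1..m}"
    by (rule permutes_superset) (use fix_top in \<open>auto simp: le_Suc_eq\<close>)
  then show thesis
    using that \<open>x \<le> m\<close> by blast
qed

lemma bubble_decomposition_exists:
  "s permutes {1..n} \<Longrightarrow> \<exists>t. bubble_indices n t \<and> s = perm_of (bubble_expr n t)"
proof (induction n arbitrary: s)
  case 0
  then show ?case by (auto simp: bubble_indices_trivial bubble_expr_trivial)
next
  case (Suc m)
  show ?case
  proof (cases "m = 0")
    case True
    then show ?thesis using Suc.prems by (auto simp: bubble_indices_trivial bubble_expr_trivial)
  next
    case False
    then have m: "1 \<le> m" by simp
    obtain x where x: "x \<le> m" and "s \<circ> perm_of (rev (bubble_word m x)) permutes {1..m}"
      using bubble_word_peel[OF Suc.prems m] .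
    then obtain t where t: "bubble_indices m t" "s \<circ> perm_of (rev (bubble_word m x)) = perm_of (bubble_expr m t)"
      using Suc.IH by blast
    have "t m = 0"
      using t(1) by (simp add: bubble_indices_iff)
    then have "(t(m := x))(m := 0) = t"
      by (auto simp: fun_eq_iff)
    then have "perm_of (bubble_expr (Suc m) (t(m := x)))
        = s \<circ> perm_of (rev (bubble_word m x)) \<circ> perm_of (bubble_word m x)"
      using bubble_expr_Suc[OF m, of "t(m := x)" 0] by (simp add: perm_of_append t(2))
    also have "\<dots> = s"
      by (simp add: comp_assoc perm_of_rev_comp)
    finally show ?thesis
      using bubble_indices_extend[OF t(1) x] by metis
  qed
qed

lemma perm_of_bubble_expr_top_preimage:
  assumes m: "1 \<le> m" and t: "bubble_indices (Suc m) t"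
  shows "perm_of (bubble_expr (Suc m) t) (if t m = 0 then Suc m else t m) = Suc m"
  using perm_of_bubble_expr_fixes[OF bubble_indices_restrict[OF t]] bubble_indices_le[OF t, of m]
    perm_of_upt_first[of "t m" m] bubble_expr_Suc[OF m, of t 0]
  by (auto simp: perm_of_append bubble_word_def)

lemma bubble_decomposition_unique:
  "bubble_indices n t \<Longrightarrow> bubble_indices n t' \<Longrightarrow> perm_of (bubble_expr n t) = perm_of (bubble_expr n t')
    \<Longrightarrow> t = t'"
proof (induction n arbitrary: t t')
  case 0
  then show ?case by (simp add: bubble_indices_trivial)
next
  case (Suc m)
  show ?case
  proof (cases "m = 0")
    case True
    then show ?thesis using Suc.prems by (simp add: bubble_indices_trivial)
  next
    case False
    then have m: "1 \<le> m" by simp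
    have split: "bubble_expr (Suc m) r = bubble_word m (r m) @ bubble_expr m (r(m := 0))"
      for r using bubble_expr_Suc[OF m] .
    have "perm_of (bubble_expr (Suc m) t) (if t m = 0 then Suc m else t m)
        = perm_of (bubble_expr (Suc m) t) (if t' m = 0 then Suc m else t' m)"
      using perm_of_bubble_expr_top_preimage[OF m Suc.prems(1)] perm_of_bubble_expr_top_preimage[OF m Suc.prems(2)]
      by (simp add: Suc.prems(3))
    then have "(if t m = 0 then Suc m else t m) = (if t' m = 0 then Suc m else t' m)"
      by (rule injD[OF inj_perm_of])
    then have top: "t m = t' m"
      using bubble_indices_le[OF Suc.prems(1), of m] bubble_indices_le[OF Suc.prems(2), of m]
      by (auto split: if_splits)
    have "perm_of (bubble_expr m (t(m := 0))) \<circ> perm_of (bubble_word m (t m))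
        = perm_of (bubble_expr m (t'(m := 0))) \<circ> perm_of (bubble_word m (t m))"
      using Suc.prems(3) unfolding split[of t] split[of t'] top perm_of_append .
    then have "perm_of (bubble_expr m (t(m := 0))) = perm_of (bubble_expr m (t'(m := 0)))"
      by (metis comp_id comp_assoc perm_of_comp_rev)
    then have "t(m := 0) = t'(m := 0)"
      by (rule Suc.IH[OF bubble_indices_restrict[OF Suc.prems(1)] bubble_indices_restrict[OF Suc.prems(2)]])
    then show ?thesis
      using top by (metis fun_upd_triv fun_upd_upd)
  qed
qed

lemma bubble_t_eqI: "bubble_indices n t \<Longrightarrow> bubble_t n (perm_of (bubble_expr n t)) = t"
  unfolding bubble_t_altdef by (rule the_equality) (auto intro: bubble_decomposition_unique)

lemma reduced_upt_append:
  assumes u: "reduced (Suc m) u" "perm_of u permutes {1..m}"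
  shows "1 \<le> j \<Longrightarrow> reduced (Suc m) ([j..<m+1] @ u)"
proof (induction "Suc m - j" arbitrary: j)
  case 0
  then show ?case using u by simp
next
  case (Suc d)
  then have "j < m + 1" by linarith
  then have "[j..<m+1] = j # [j+1..<m+1]"
    by (simp only: upt_conv_Cons Suc_eq_plus1)
  moreover have "reduced (Suc m) ([j+1..<m+1] @ u)"
    using Suc by simp
  moreover have "perm_of [j+1..<m+1] j = j"
    by (rule perm_of_fixpoint) auto
  moreover have "perm_of [j+1..<m+1] (j+1) = m + 1"
    using \<open>j < m + 1\<close> by (intro perm_of_upt_first) simp
  moreover have "perm_of u (m+1) = m + 1" "perm_of u j \<le> m"
    using u(2) \<open>j < m + 1\<close> Suc.prems permutes_in_image[OF u(2), of j]
    by (auto intro: permutes_not_in)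
  ultimately show ?case
    using Suc.prems \<open>j < m + 1\<close> by (simp add: reduced_Cons_iff perm_of_append del: upt.simps)
qed

lemma reduced_bubble_expr: "bubble_indices n t \<Longrightarrow> reduced n (bubble_expr n t)"
proof (induction n arbitrary: t)
  case 0
  then show ?case by (simp add: bubble_expr_trivial reduced_Nil)
next
  case (Suc m)
  show ?case
  proof (cases "m = 0")
    case True
    then show ?thesis by (simp add: bubble_expr_trivial reduced_Nil)
  next
    case False
    then have m: "1 \<le> m" by simp
    define u where "u = bubble_expr m (t(m := 0))"
    have "bubble_indices m (t(m := 0))"
      using bubble_indices_restrict[OF Suc.prems] .
    then have "reduced m u" "perm_of u permutes {1..m}"
      unfolding u_def using Suc.IH set_bubble_expr perm_of_permutes by blast+
    then have "reduced (Suc m) u"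
      by (fastforce simp: reduced_def inversion_number_def inversions_Suc)
    then have "reduced (Suc m) (bubble_word m (t m) @ u)"
      using reduced_upt_append[OF _ \<open>perm_of u permutes {1..m}\<close>, of "t m"]
      by (cases "t m = 0") (simp_all add: bubble_word_def del: upt.simps)
    then show ?thesis
      using bubble_expr_Suc[OF m, of t 0] by (simp add: u_def)
  qed
qed

lemma reduced_exists: "g permutes {1..n} \<Longrightarrow> \<exists>w. reduced n w \<and> perm_of w = g"
  using bubble_decomposition_exists reduced_bubble_expr by metis

lemma reduced_expr_iff_reduced:
  assumes "g permutes {1..n}"
  shows "reduced_expr n g w \<longleftrightarrow> reduced n w \<and> perm_of w = g"
proof
  assume w: "reduced_expr n g w"
  obtain w0 where w0: "reduced n w0" "perm_of w0 = g"
    using reduced_exists[OF assms] by blast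
  then have "length w \<le> inversion_number n g"
    using w unfolding reduced_expr_def reduced_def by auto
  moreover have "inversion_number n g \<le> length w"
    using w inversion_number_le_length unfolding reduced_expr_def by blast
  ultimately show "reduced n w \<and> perm_of w = g"
    using w unfolding reduced_expr_def reduced_def by simp
next
  assume w: "reduced n w \<and> perm_of w = g"
  have "length w \<le> length w'" if "set w' \<subseteq> {1..n-1}" "perm_of w' = g" for w'
    using w inversion_number_le_length[OF that(1)] that(2) by (simp add: reduced_def)
  then show "reduced_expr n g w"
    using w by (simp add: reduced_expr_def reduced_def)
qed

lemma reduced_some_reduced_expr:
  assumes "g permutes {1..n}"
  shows "reduced n (SOME w. reduced_expr n g w) \<and> perm_of (SOME w. reduced_expr n g w) = g"
proof -
  obtain w where "reduced n w" "perm_of w = g"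
    using reduced_exists[OF assms] by blast
  then have "reduced_expr n g w"
    using reduced_expr_iff_reduced[OF assms] by blast
  then have "reduced_expr n g (SOME w. reduced_expr n g w)"
    by (rule someI)
  then show ?thesis
    using reduced_expr_iff_reduced[OF assms] by blast
qed

section \<open>Matsumoto's theorem\<close>

lemma mon_cong_eq_equivclp: "mon_cong R = equivclp (ctx_step R)"
  unfolding mon_cong_def equivclp_def by (rule arg_cong[where f = rtranclp]) (auto simp: symclp_def fun_eq_iff)

lemma equivp_mon_cong: "equivp (mon_cong R)"
  by (simp add: mon_cong_eq_equivclp)

lemma mon_cong_Cons:
  assumes "mon_cong R u v" shows "mon_cong R (c # u) (c # v)"
proof -
  have Cons_step: "ctx_step R (c # x) (c # y)" if "ctx_step R x y" for x y
    using that unfolding ctx_step_def by (metis append_Cons)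
  show ?thesis
    using assms unfolding mon_cong_eq_equivclp
    by (induction rule: equivclp_induct) (auto intro: equivclp_into_equivclp Cons_step)
qed

lemma mon_cong_rel: "R l r \<Longrightarrow> mon_cong R (l @ y) (r @ y)"
  unfolding mon_cong_eq_equivclp ctx_step_def by (intro r_into_equivclp) (metis append_Nil)

abbreviation braid_cong :: "nat \<Rightarrow> nat list \<Rightarrow> nat list \<Rightarrow> bool" where
  "braid_cong n u v \<equiv> mon_cong (braid_rel n) (Sigs u) (Sigs v)"

lemma braid_cong_refl: "braid_cong n u u"
  by (simp add: mon_cong_eq_equivclp)

lemma braid_cong_sym: "braid_cong n u v \<Longrightarrow> braid_cong n v u"
  by (simp add: mon_cong_eq_equivclp equivclp_sym)

lemma braid_cong_trans [trans]: "braid_cong n u v \<Longrightarrow> braid_cong n v w \<Longrightarrow> braid_cong n u w"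
  unfolding mon_cong_eq_equivclp by (rule equivclp_trans)

lemma braid_cong_Cons: "braid_cong n u v \<Longrightarrow> braid_cong n (a # u) (a # v)"
  using mon_cong_Cons by (fastforce simp: Sigs_def)

lemma braid_cong_commute:
  assumes "1 \<le> a" "a < n" "1 \<le> b" "b < n" "a + 1 < b \<or> b + 1 < a"
  shows "braid_cong n (a # b # v) (b # a # v)"
proof -
  have rel: "braid_rel n [Sig a, Sig b] [Sig b, Sig a]"
    using assms by (rule braid_rel.ss)
  show ?thesis
    using mon_cong_rel[where R = "braid_rel n", OF rel, of "Sigs v"] by (simp add: Sigs_def)
qed

lemma braid_cong_braid:
  assumes "1 \<le> a" "a + 2 \<le> n"
  shows "braid_cong n (a # (a+1) # a # v) ((a+1) # a # (a+1) # v)"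
proof -
  have rel: "braid_rel n [Sig a, Sig (a+1), Sig a] [Sig (a+1), Sig a, Sig (a+1)]"
    using assms by (rule braid_rel.sss)
  show ?thesis
    using mon_cong_rel[where R = "braid_rel n", OF rel, of "Sigs v"] by (simp add: Sigs_def)
qed

lemma reduced_length_eq: "reduced n w \<Longrightarrow> reduced n w' \<Longrightarrow> perm_of w = perm_of w' \<Longrightarrow> length w = length w'"
  by (simp add: reduced_def)

text \<open>The two exchange steps of Matsumoto's theorem: if the reduced words a # u and b # u' spell
  the same permutation g, then g has descents at a and at b, so it also has a reduced word
  beginning with the braid relation between a and b; the tails are then compared by induction.\<close>

lemma braid_cong_reduced_far_heads:
  assumes IH: "\<And>v v'. length v \<le> length u \<Longrightarrow> reduced n v \<Longrightarrow> reduced n v' \<Longrightarrow> perm_of v = perm_of v'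
      \<Longrightarrow> braid_cong n v v'"
    and r: "reduced n (a # u)" and r': "reduced n (b # u')"
    and eq: "perm_of (a # u) = perm_of (b # u')" and far: "a + 1 < b \<or> b + 1 < a"
  shows "braid_cong n (a # u) (b # u')"
proof -
  define g where "g = perm_of (a # u)"
  have u: "perm_of u x = g (sw a x)" for x
    by (simp add: g_def)
  have u': "perm_of u' x = g (sw b x)" for x
    using fun_cong[OF eq, of "sw b x"] by (simp add: g_def)
  have ru: "reduced n u" and a: "1 \<le> a" "a < n" and "g (a+1) < g a"
    using r unfolding reduced_Cons_iff u by (simp_all add: sw_def)
  have ru': "reduced n u'" and b: "1 \<le> b" "b < n" and "g (b+1) < g b"
    using r' unfolding reduced_Cons_iff u' by (simp_all add: sw_def)
  have sep: "a \<noteq> b" "a \<noteq> b + 1" "b \<noteq> a + 1"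
    using far by auto
  have "perm_of (b # u) permutes {1..n}"
    using ru b by (intro perm_of_permutes) (auto simp: reduced_def)
  then obtain v where rv: "reduced n v" and "perm_of v = perm_of (b # u)"
    using reduced_exists by blast
  then have v: "perm_of v x = g (sw a (sw b x))" for x
    by (simp add: u)
  have "reduced n (b # v)" "reduced n (a # v)"
    using rv a b sep \<open>g (a+1) < g a\<close> \<open>g (b+1) < g b\<close> unfolding reduced_Cons_iff v
    by (simp_all add: sw_def)
  moreover have "perm_of (b # v) = perm_of u" "perm_of (a # v) = perm_of u'"
    using sep by (simp_all add: fun_eq_iff v u u' sw_def)
  moreover have "length u' = length u"
    using reduced_length_eq[OF r r' eq] by simp
  ultimately have "braid_cong n u (b # v)" "braid_cong n u' (a # v)"
    using IH ru ru' by auto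
  then have "braid_cong n (a # u) (a # b # v)" "braid_cong n (b # u') (b # a # v)"
    by (auto intro: braid_cong_Cons)
  then show ?thesis
    using braid_cong_commute[OF a b far] by (meson braid_cong_sym braid_cong_trans)
qed

lemma braid_cong_reduced_adjacent_heads:
  assumes IH: "\<And>v v'. length v \<le> length u \<Longrightarrow> reduced n v \<Longrightarrow> reduced n v' \<Longrightarrow> perm_of v = perm_of v'
      \<Longrightarrow> braid_cong n v v'"
    and r: "reduced n (a # u)" and r': "reduced n ((a+1) # u')"
    and eq: "perm_of (a # u) = perm_of ((a+1) # u')"
  shows "braid_cong n (a # u) ((a+1) # u')"
proof -
  define g where "g = perm_of (a # u)"
  have u: "perm_of u x = g (sw a x)" for x
    by (simp add: g_def)
  have u': "perm_of u' x = g (sw (a+1) x)" for x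
    using fun_cong[OF eq, of "sw (a+1) x"] by (simp add: g_def)
  have ru: "reduced n u" and a: "1 \<le> a" and "g (a+1) < g a"
    using r unfolding reduced_Cons_iff u by (simp_all add: sw_def)
  have ru': "reduced n u'" and a': "a + 2 \<le> n" and "g (a+2) < g (a+1)"
    using r' unfolding reduced_Cons_iff u' by (simp_all add: sw_def)
  have "perm_of (a # (a+1) # u) permutes {1..n}"
    using ru a a' by (intro perm_of_permutes) (auto simp: reduced_def)
  then obtain v where rv: "reduced n v" and "perm_of v = perm_of (a # (a+1) # u)"
    using reduced_exists by blast
  then have v: "perm_of v x = g (sw a (sw (a+1) (sw a x)))" for x
    by (simp add: u)
  have "reduced n (a # v)" "reduced n ((a+1) # v)"
    using rv a a' \<open>g (a+1) < g a\<close> \<open>g (a+2) < g (a+1)\<close> unfolding reduced_Cons_iff v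
    by (simp_all add: sw_def)
  then have "reduced n ((a+1) # a # v)" "reduced n (a # (a+1) # v)"
    using a a' \<open>g (a+1) < g a\<close> \<open>g (a+2) < g (a+1)\<close> unfolding reduced_Cons_iff perm_of.simps o_apply v
    by (simp_all add: sw_def)
  moreover have "perm_of ((a+1) # a # v) = perm_of u" "perm_of (a # (a+1) # v) = perm_of u'"
    by (simp_all add: fun_eq_iff v u u' sw_def)
  moreover have "length u' = length u"
    using reduced_length_eq[OF r r' eq] by simp
  ultimately have "braid_cong n u ((a+1) # a # v)" "braid_cong n u' (a # (a+1) # v)"
    using IH ru ru' by auto
  then have "braid_cong n (a # u) (a # (a+1) # a # v)" "braid_cong n ((a+1) # u') ((a+1) # a # (a+1) # v)"
    by (auto intro: braid_cong_Cons)
  then show ?thesis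
    using braid_cong_braid[OF a a'] by (meson braid_cong_sym braid_cong_trans)
qed

theorem matsumoto:
  "reduced n w \<Longrightarrow> reduced n w' \<Longrightarrow> perm_of w = perm_of w' \<Longrightarrow> braid_cong n w w'"
proof (induction "length w" arbitrary: w w' rule: less_induct)
  case less
  show ?case
  proof (cases w)
    case Nil
    then show ?thesis
      using reduced_length_eq[OF less.prems] by (simp add: braid_cong_refl)
  next
    case (Cons a u)
    then obtain b u' where w': "w' = b # u'"
      using reduced_length_eq[OF less.prems] by (cases w') auto
    have IH: "braid_cong n v v'"
      if "length v \<le> length u" and "reduced n v" "reduced n v'" "perm_of v = perm_of v'" for v v'
    proof (rule less.hyps)
      show "length v < length w"
        using \<open>length v \<le> length u\<close> Cons by simp
    qed fact+
    have r: "reduced n (a # u)" and r': "reduced n (b # u')" and eq: "perm_of (a # u) = perm_of (b # u')"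
      using less.prems unfolding Cons w' by auto
    have lu: "length u' = length u"
      using reduced_length_eq[OF r r' eq] by simp
    consider "a = b" | "a + 1 < b \<or> b + 1 < a" | "b = a + 1" | "a = b + 1"
      by linarith
    then have "braid_cong n (a # u) (b # u')"
    proof cases
      case 1
      have "perm_of u = perm_of u'"
      proof
        fix x
        show "perm_of u x = perm_of u' x"
          using fun_cong[OF eq, of "sw a x"] 1 by simp
      qed
      moreover have "reduced n u" "reduced n u'"
        using r r' by (simp_all add: reduced_Cons_iff)
      ultimately have "braid_cong n u u'"
        by (intro IH) simp_all
      then show ?thesis
        unfolding 1 by (rule braid_cong_Cons)
    next
      case 2
      show ?thesis
        by (rule braid_cong_reduced_far_heads[OF IH r r' eq 2])
    next
      case 3
      show ?thesis
        unfolding 3 by (rule braid_cong_reduced_adjacent_heads[OF IH r r'[unfolded 3] eq[unfolded 3]])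
    next
      case 4
      have "braid_cong n (b # u') (a # u)"
        unfolding 4
        by (rule braid_cong_reduced_adjacent_heads[OF IH[folded lu] r' r[unfolded 4] eq[symmetric, unfolded 4]])
      then show ?thesis
        by (rule braid_cong_sym)
    qed
    then show ?thesis
      unfolding Cons w' .
  qed
qed

section \<open>The image of Q under alpha\<close>

lemma alpha_t_eq_filter: "alpha_t x = filter (\<lambda>(c, v). list_all is_Sig v) x"
  by (induction x) (auto simp: alpha_t_def)

lemma alpha_t_fs_mult: "alpha_t (fs_mult x y) = fs_mult (alpha_t x) (alpha_t y)"
proof -
  have filter_scaled: "filter (\<lambda>(c, v). list_all is_Sig v) (map (\<lambda>(d, w). (c * d, v @ w)) y)
      = (if list_all is_Sig v then map (\<lambda>(d, w). (c * d, v @ w)) (filter (\<lambda>(c, v). list_all is_Sig v) y)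
         else [])" for c :: 'a and v
    by (induction y) auto
  show ?thesis
    unfolding alpha_t_eq_filter by (induction x) (auto simp: fs_mult_def filter_scaled)
qed

lemma alpha_t_fs_prod: "alpha_t (fs_prod xs) = fs_prod (map alpha_t xs)"
proof (induction xs)
  case Nil
  show ?case by (simp add: fs_prod_def alpha_t_def)
next
  case (Cons x xs)
  then show ?case by (simp add: fs_prod_def alpha_t_fs_mult)
qed

lemma fs_prod_singletons: "fs_prod (map (\<lambda>x. [(1, f x)]) xs) = [(1, concat (map f xs))]"
  unfolding fs_prod_def by (induction xs) (auto simp: fs_mult_def)

lemma list_all_is_Sig_Sigs: "list_all is_Sig (Sigs w)"
  by (induction w) (simp_all add: Sigs_def)

lemma alpha_t_Q_factor: "0 < t \<Longrightarrow> t \<le> k \<Longrightarrow> alpha_t (Q_factor k t t') = [(1, Sigs (bubble_word k t))]"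
proof -
  assume "0 < t" "t \<le> k"
  then have "[t..<k+1] = t # [t+1..<k+1]"
    by (simp only: upt_conv_Cons Suc_eq_plus1)
  then show ?thesis
    using \<open>0 < t\<close> list_all_is_Sig_Sigs[of "[t+1..<k+1]"]
    by (simp del: upt.simps add: Q_factor_def alpha_t_def fs_mult_def Sigs_def bubble_word_def)
qed

lemma alpha_t_Q:
  assumes t: "bubble_indices (p + q) t"
  shows "alpha_t (Q p q (perm_of (bubble_expr (p + q) t))) = [(1, Sigs (bubble_expr (p + q) t))]"
proof -
  have factors: "map alpha_t [Q_factor k (t k) (t (k+1)). k \<leftarrow> ks, t k \<noteq> 0]
      = map (\<lambda>k. [(1, Sigs (bubble_word k (t k)))]) (filter (\<lambda>k. t k \<noteq> 0) ks)" for ks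
    using bubble_indices_le[OF t] by (induction ks) (simp_all add: alpha_t_Q_factor)
  have concat_factors: "concat (map (\<lambda>k. Sigs (bubble_word k (t k))) (filter (\<lambda>k. t k \<noteq> 0) ks))
      = Sigs (concat (map (\<lambda>k. bubble_word k (t k)) ks))" for ks
    by (induction ks) (auto simp: Sigs_def bubble_word_def)
  show ?thesis
    unfolding Q_def Let_def bubble_t_eqI[OF t] alpha_t_fs_prod factors fs_prod_singletons concat_factors
    by (simp only: bubble_expr_def)
qed

lemma fs_eq_singleton: "equivp E \<Longrightarrow> E a b \<Longrightarrow> fs_eq E [(c, a)] [(c, b)]"
  by (simp add: fs_eq_def) (meson equivp_symp equivp_transp)

theorem lemma4:
  fixes p q :: nat and s :: "nat \<Rightarrow> nat"
  assumes "1 \<le> p" and "1 \<le> q" and "s \<in> shuffles p q"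
  shows "fs_eq (mon_cong (braid_rel (p + q)))
           (alpha_t (Q p q s :: ('k::field, gen list) fsum)) (T (p + q) s)
       \<and> fs_eq (=) (beta_t (T (p + q) s :: ('k, gen list) fsum)) [(1, s)]"
proof -
  let ?n = "p + q"
  have s: "s permutes {1..?n}"
    using assms(3) by (simp add: shuffles_def Sym_def)
  then obtain t where t: "bubble_indices ?n t" and s_bubble: "s = perm_of (bubble_expr ?n t)"
    using bubble_decomposition_exists by blast
  define w where "w = (SOME w. reduced_expr ?n s w)"
  have w: "reduced ?n w" "perm_of w = s"
    unfolding w_def using reduced_some_reduced_expr[OF s] by auto
  have T: "T ?n s = [(1, Sigs w)]"
    by (simp add: T_def w_def)
  have "braid_cong ?n (bubble_expr ?n t) w"
    using matsumoto[OF reduced_bubble_expr[OF t] w(1)] s_bubble w(2) by simp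
  moreover have "alpha_t (Q p q s :: ('k, gen list) fsum) = [(1, Sigs (bubble_expr ?n t))]"
    using alpha_t_Q[OF t] s_bubble by simp
  moreover have "beta_t [(1 :: 'k, Sigs w)] = [(1, s)]"
    using w(2) by (simp add: beta_t_def Sigs_def comp_def)
  ultimately show ?thesis
    unfolding T by (simp add: fs_eq_singleton equivp_mon_cong identity_equivp)
qed

end
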